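(* Let $Q=ABCD$ be any non-degenerate quadrangle of perimeter $2$ (convex, non-convex or self-intersecting) and $Q^\circ=KLMN$ its dual. Then $|AC|=|KM|$ and $|BD|=|LN|$.
   Context: Identify $\mathbb{R}^2$ with $\mathbb{C}$. A quadrangle $Q=ABCD$ is an ordered 4-tuple of points $A,B,C,D\in\mathbb{C}$: $A$ is the first vertex and the order $A\to B\to C\to D\to A$ is the direction of traversal. Its edge vectors are $z_1=B-A$, $z_2=C-B$, $z_3=D-C$, $z_4=A-D$, so $z_1+z_2+z_3+z_4=0$; its perimeter is $|z_1|+|z_2|+|z_3|+|z_4|$. $Q$ is non-degenerate if each pair of consecutive edge vectors $(z_1,z_2),(z_2,z_3),(z_3,z_4),(z_4,z_1)$ consists of nonzero, non-collinear vectors. Associated plane: for a non-degenerate $Q$ of perimeter $2$, choose $u_1,\dots,u_4\in\mathbb{C}$ with $u_k^2=z_k$, where $u_1$ is an arbitrary square root of $z_1$ and for $k=1,2,3$ the sign of $u_{k+1}$ is chosen so that $\operatorname{Im}(\overline{u_k}u_{k+1})$ has the same sign as $\operatorname{Im}(\overline{z_k}z_{k+1})$. Write $u_k=a_k+i b_k$ and $\bar a=(a_1,a_2,a_3,a_4)$, $\bar b=(b_1,b_2,b_3,b_4)$; these are orthonormal in $\mathbb{R}^4$. Let $\Pi=\operatorname{span}(\bar a,\bar b)$ and $\Pi^\perp$ its orthogonal complement. Dual quadrangle: choose an orthonormal basis $(\bar c,\bar d)$ of $\Pi^\perp$, put $w_k=(c_k+i d_k)^2$; then $\sum_k w_k=0$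 and $\sum_k|w_k|=2$. The dual quadrangle $Q^\circ=KLMN$ is the quadrangle with $L-K=w_1$, $M-L=w_2$, $N-M=w_3$, $K-N=w_4$. It is determined up to rotation, reflection and translation. *)

theory Defs
  imports "HOL-Analysis.Analysis"
begin

definition qedge :: "complex \<Rightarrow> complex \<Rightarrow> complex \<Rightarrow> complex \<Rightarrow> nat \<Rightarrow> complex" where
  "qedge A B C D k =
     (if k = 1 then B - A else if k = 2 then C - B else if k = 3 then D - C else A - D)"

definition nxt :: "nat \<Rightarrow> nat" where
  "nxt k = k mod 4 + 1"

definition perimeter :: "complex \<Rightarrow> complex \<Rightarrow> complex \<Rightarrow> complex \<Rightarrow> real" where
  "perimeter A B C D = (\<Sum>k\<in>{1..4}. norm (qedge A B C D k))"

definition nondegenerate :: "complex \<Rightarrow> complex \<Rightarrow> complex \<Rightarrow> complex \<Rightarrow> bool" where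
  "nondegenerate A B C D =
     (\<forall>k\<in>{1..4}. qedge A B C D k \<noteq> 0 \<and> qedge A B C D (nxt k) \<noteq> 0 \<and>
        \<not> collinear {0, qedge A B C D k, qedge A B C D (nxt k)})"

definition inner4 :: "(nat \<Rightarrow> real) \<Rightarrow> (nat \<Rightarrow> real) \<Rightarrow> real" where
  "inner4 x y = (\<Sum>k\<in>{1..4}. x k * y k)"

text \<open>Admissible choice of square roots u_1..u_4 of the edge vectors
  (u_1 arbitrary, signs of u_2,u_3,u_4 fixed by the orientation condition).\<close>
definition admissible_roots :: "complex \<Rightarrow> complex \<Rightarrow> complex \<Rightarrow> complex \<Rightarrow> (nat \<Rightarrow> complex) \<Rightarrow> bool" where
  "admissible_roots A B C D u =
     ((\<forall>k\<in>{1..4}. (u k)\<^sup>2 = qedge A B C D k) \<and>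
      (\<forall>k\<in>{1..3}. sgn (Im (cnj (u k) * u (k + 1))) =
                   sgn (Im (cnj (qedge A B C D k) * qedge A B C D (k + 1)))))"

text \<open>KLMN is a dual quadrangle of ABCD: for some admissible roots u (with
  a = Re u, b = Im u spanning the plane Pi) and some orthonormal basis (c,d) of the
  orthogonal complement of Pi, the edges of KLMN are w_k = (c_k + i d_k)^2.\<close>
definition is_dual :: "complex \<Rightarrow> complex \<Rightarrow> complex \<Rightarrow> complex \<Rightarrow>
                       complex \<Rightarrow> complex \<Rightarrow> complex \<Rightarrow> complex \<Rightarrow> bool" where
  "is_dual A B C D K L M N =
     (\<exists>u c d. admissible_roots A B C D u \<and>
        (let a = (\<lambda>k. Re (u k)); b = (\<lambda>k. Im (u k));
             w = (\<lambda>k. (Complex (c k) (d k))\<^sup>2) in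
         inner4 c a = 0 \<and> inner4 c b = 0 \<and> inner4 d a = 0 \<and> inner4 d b = 0 \<and>
         inner4 c c = 1 \<and> inner4 d d = 1 \<and> inner4 c d = 0 \<and>
         L - K = w 1 \<and> M - L = w 2 \<and> N - M = w 3 \<and> K - N = w 4))"

end

theory Submission imports Defs begin

text \<open>Closure and perimeter 2 say exactly that \<open>Re u\<close> and \<open>Im u\<close> are orthonormal, so together
  with \<open>c, d\<close> they form the columns of an orthogonal 4\<times>4 matrix, whose rows are then orthonormal
  as well. A diagonal is the sum of two consecutive edges, \<open>C - A = u\<^sub>1\<^sup>2 + u\<^sub>2\<^sup>2\<close>, and
  \<open>|z\<^sup>2 + w\<^sup>2|\<^sup>2\<close> is a polynomial in \<open>|z|\<^sup>2, |w|\<^sup>2, z \<bullet> w\<close> that is unchanged when these are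
  replaced by their complements \<open>1 - |z|\<^sup>2, 1 - |w|\<^sup>2, - z \<bullet> w\<close> given by the orthonormal rows.\<close>

lemma norm_add_power2_squared:
  fixes z w :: complex
  shows "(norm (z\<^sup>2 + w\<^sup>2))\<^sup>2 = (z \<bullet> z + w \<bullet> w)\<^sup>2 - 4 * ((z \<bullet> z) * (w \<bullet> w) - (z \<bullet> w)\<^sup>2)"
  unfolding cmod_power2 by (simp add: inner_complex_def power2_eq_square algebra_simps)

lemma norm_add_power2_complementary:
  fixes z w \<zeta> \<omega> :: complex
  assumes "z \<bullet> z + \<zeta> \<bullet> \<zeta> = 1" "w \<bullet> w + \<omega> \<bullet> \<omega> = 1" "z \<bullet> w + \<zeta> \<bullet> \<omega> = 0"
  shows "norm (z\<^sup>2 + w\<^sup>2) = norm (\<zeta>\<^sup>2 + \<omega>\<^sup>2)"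
proof -
  have complement: "\<zeta> \<bullet> \<zeta> = 1 - z \<bullet> z" "\<omega> \<bullet> \<omega> = 1 - w \<bullet> w" "\<zeta> \<bullet> \<omega> = - (z \<bullet> w)"
    using assms by linarith+
  have "(norm (z\<^sup>2 + w\<^sup>2))\<^sup>2 = (norm (\<zeta>\<^sup>2 + \<omega>\<^sup>2))\<^sup>2"
    unfolding norm_add_power2_squared complement by (simp add: power2_eq_square algebra_simps)
  then show ?thesis
    by simp
qed

lemma orthonormal_Re_Im_if_sum_power2_zero:
  fixes u :: "'a \<Rightarrow> complex"
  assumes "(\<Sum>k\<in>S. (u k)\<^sup>2) = 0" and "(\<Sum>k\<in>S. (norm (u k))\<^sup>2) = 2"
  shows "(\<Sum>k\<in>S. (Re (u k))\<^sup>2) = 1" "(\<Sum>k\<in>S. (Im (u k))\<^sup>2) = 1"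
    "(\<Sum>k\<in>S. Re (u k) * Im (u k)) = 0"
proof -
  have "(\<Sum>k\<in>S. (Re (u k))\<^sup>2 - (Im (u k))\<^sup>2) = 0"
    using arg_cong[OF assms(1), of Re] by (simp add: power2_eq_square)
  moreover have "(\<Sum>k\<in>S. (Re (u k))\<^sup>2 + (Im (u k))\<^sup>2) = 2"
    using assms(2) by (simp add: cmod_power2)
  moreover have "(\<Sum>k\<in>S. 2 * (Re (u k) * Im (u k))) = 0"
    using arg_cong[OF assms(1), of Im] by (simp add: power2_eq_square algebra_simps)
  ultimately show "(\<Sum>k\<in>S. (Re (u k))\<^sup>2) = 1" "(\<Sum>k\<in>S. (Im (u k))\<^sup>2) = 1"
    "(\<Sum>k\<in>S. Re (u k) * Im (u k)) = 0"
    by (simp_all add: sum.distrib sum_subtractf flip: sum_distrib_left)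
qed

lemma orthonormal_rows_if_orthonormal_columns:
  fixes M :: "'n::finite \<Rightarrow> 'n \<Rightarrow> real"
  assumes "\<And>i j. (\<Sum>k\<in>UNIV. M k i * M k j) = (if i = j then 1 else 0)"
  shows "(\<Sum>k\<in>UNIV. M i k * M j k) = (if i = j then 1 else 0)"
proof -
  define Q :: "real^'n^'n" where "Q = (\<chi> i j. M i j)"
  have "transpose Q ** Q = mat 1"
    by (simp add: Q_def vec_eq_iff matrix_matrix_mult_def transpose_def mat_def assms)
  then have "Q ** transpose Q = mat 1"
    by (simp add: matrix_left_right_inverse)
  then show ?thesis
    by (simp add: Q_def vec_eq_iff matrix_matrix_mult_def transpose_def mat_def)
qed

lemma orthonormal_rows_if_orthonormal_columns_on:
  fixes M :: "'a \<Rightarrow> 'a \<Rightarrow> real" and h :: "'n::finite \<Rightarrow> 'a"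
  assumes h: "bij_betw h UNIV I"
    and cols: "\<And>i j. i \<in> I \<Longrightarrow> j \<in> I \<Longrightarrow> (\<Sum>k\<in>I. M k i * M k j) = (if i = j then 1 else 0)"
    and "i \<in> I" "j \<in> I"
  shows "(\<Sum>k\<in>I. M i k * M j k) = (if i = j then 1 else 0)"
proof -
  have sum_I: "(\<Sum>k\<in>I. f k) = (\<Sum>k\<in>UNIV. f (h k))" for f :: "'a \<Rightarrow> real"
    using sum.reindex_bij_betw[OF h] by metis
  have h_eq: "h p = h q \<longleftrightarrow> p = q" for p q
    using h by (auto simp: bij_betw_def inj_def)
  obtain p q where "i = h p" "j = h q"
    using h \<open>i \<in> I\<close> \<open>j \<in> I\<close> by (metis bij_betw_imp_surj_on imageE)
  moreover have "(\<Sum>k\<in>UNIV. M (h k) (h p) * M (h k) (h q)) = (if p = q then 1 else 0)" for p q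
    using cols[of "h p" "h q"] h by (simp add: sum_I h_eq bij_betwE)
  ultimately show ?thesis
    using orthonormal_rows_if_orthonormal_columns[of "\<lambda>p q. M (h p) (h q)" p q]
    by (simp add: sum_I h_eq)
qed

lemma orthonormal_rows_4:
  fixes a b c d :: "nat \<Rightarrow> real"
  assumes "inner4 a a = 1" "inner4 b b = 1" "inner4 c c = 1" "inner4 d d = 1"
    and "inner4 a b = 0" "inner4 c a = 0" "inner4 c b = 0" "inner4 d a = 0" "inner4 d b = 0"
    "inner4 c d = 0"
    and "i \<in> {1..4}" "j \<in> {1..4}"
  shows "a i * a j + b i * b j + c i * c j + d i * d j = (if i = j then 1 else 0)"
proof -
  define M :: "nat \<Rightarrow> nat \<Rightarrow> real"
    where "M k l = (if l = 1 then a k else if l = 2 then b k else if l = 3 then c k else d k)" for k l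
  have sum_4: "(\<Sum>k\<in>{1..4}. f k) = f 1 + f 2 + f 3 + f (4::nat)" for f :: "nat \<Rightarrow> real"
    by (simp add: numeral_eq_Suc)
  have cols: "(\<Sum>k\<in>{1..4}. M k l * M k l') = (if l = l' then 1 else 0)"
    if "l \<in> {1..4}" "l' \<in> {1..4}" for l l'
    using that assms(1-10) unfolding inner4_def sum_4
    by (auto simp: M_def numeral_eq_Suc le_Suc_eq algebra_simps)
  obtain h :: "4 \<Rightarrow> nat" where "bij_betw h UNIV {1..4}"
    using finite_same_card_bij[of "UNIV :: 4 set" "{1..4::nat}"] by auto
  from orthonormal_rows_if_orthonormal_columns_on[OF this cols assms(11,12)]
  show ?thesis
    unfolding sum_4 by (simp add: M_def)
qed

lemma sum_qedge: "(\<Sum>k\<in>{1..4}. qedge A B C D k) = 0"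
  by (simp add: qedge_def numeral_eq_Suc)

text \<open>Neither non-degeneracy nor the sign convention for the roots is needed: the identity
  holds for any square roots of the edges and any orthonormal frame of the complement.\<close>

theorem mainTheorem11:
  fixes A B C D K L M N :: complex
  assumes "nondegenerate A B C D"
    and "perimeter A B C D = 2"
    and "is_dual A B C D K L M N"
  shows "dist A C = dist K M \<and> dist B D = dist L N"
proof -
  obtain u c d where roots: "admissible_roots A B C D u"
    and frame: "inner4 c (\<lambda>k. Re (u k)) = 0" "inner4 c (\<lambda>k. Im (u k)) = 0"
      "inner4 d (\<lambda>k. Re (u k)) = 0" "inner4 d (\<lambda>k. Im (u k)) = 0"
      "inner4 c c = 1" "inner4 d d = 1" "inner4 c d = 0"
    and dual_edges: "L - K = (Complex (c 1) (d 1))\<^sup>2" "M - L = (Complex (c 2) (d 2))\<^sup>2"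
      "N - M = (Complex (c 3) (d 3))\<^sup>2" "K - N = (Complex (c 4) (d 4))\<^sup>2"
    using assms(3) unfolding is_dual_def Let_def by blast
  define v where "v k = Complex (c k) (d k)" for k
  have edges: "qedge A B C D k = (u k)\<^sup>2" if "k \<in> {1..4}" for k
    using roots that by (simp add: admissible_roots_def)
  have "(\<Sum>k\<in>{1..4}. (u k)\<^sup>2) = 0" "(\<Sum>k\<in>{1..4}. (norm (u k))\<^sup>2) = 2"
    using sum_qedge[of A B C D] assms(2) edges
    by (simp_all add: perimeter_def norm_power)
  note plane = orthonormal_Re_Im_if_sum_power2_zero[OF this]
  have rows: "u i \<bullet> u j + v i \<bullet> v j = (if i = j then 1 else 0)"
    if "i \<in> {1..4}" "j \<in> {1..4}" for i j
    using orthonormal_rows_4[OF _ _ frame(5,6) _ frame(1-4,7) that] plane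
    by (simp add: v_def inner_complex_def inner4_def power2_eq_square mult.commute)
  have "C - A = qedge A B C D 1 + qedge A B C D 2" "D - B = qedge A B C D 2 + qedge A B C D 3"
    by (simp_all add: qedge_def)
  then have "C - A = (u 1)\<^sup>2 + (u 2)\<^sup>2" "D - B = (u 2)\<^sup>2 + (u 3)\<^sup>2"
    by (simp_all add: edges)
  moreover have "M - K = (v 1)\<^sup>2 + (v 2)\<^sup>2" "N - L = (v 2)\<^sup>2 + (v 3)\<^sup>2"
    using dual_edges by (simp_all add: v_def algebra_simps flip: diff_add_cancel)
  ultimately have "norm (C - A) = norm (M - K)" "norm (D - B) = norm (N - L)"
    by (auto intro!: norm_add_power2_complementary simp: rows)
  then show ?thesis
    by (metis dist_norm norm_minus_commute)
qed

end
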